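(* Let $\mathcal{X}$ be a finite nonempty set of types and $\Phi=(\Phi_{xy})_{x,y\in\mathcal{X}}$ a real matrix with $\Phi_{xy}=\Phi_{yx}$. Let $(n^k)_{k\ge1}$ be a sequence of vectors of nonnegative integers $n^k=(n^k_x)_{x\in\mathcal{X}}$ with $N^k=\sum_x n^k_x\to\infty$ and $n^k_x/N^k\to f_x$ for each $x$, as $k\to\infty$. Then $$\lim_{k\to\infty}\frac{\mathcal{W}_{\mathcal{P}}(n^k,\Phi)}{N^k}=\lim_{k\to\infty}\frac{\mathcal{W}_{\mathcal{B}}(n^k,n^k,\Phi/2)}{N^k}=\mathcal{W}_{\mathcal{B}}(f,f,\Phi/2).$$
   Context: Feasible roommate matchings: $\mathcal{P}(n)=\{\mu=(\mu_{xy})_{x,y\in\mathcal{X}}:\ \mu_{xy}\in\mathbb{N},\ \mu_{xy}=\mu_{yx},\ 2\mu_{xx}+\sum_{y\neq x}\mu_{xy}\le n_x\ \forall x\}$; total surplus $S_R(\mu;\Phi)=\sum_x\mu_{xx}\Phi_{xx}+\sum_{x\neq y}\mu_{xy}\Phi_{xy}/2$; $\mathcal{W}_{\mathcal{P}}(n,\Phi)=\max_{\mu\in\mathcal{P}(n)}S_R(\mu;\Phi)$. For integer $n$, $\mathcal{B}(n,n)=\{\nu\in\mathbb{N}^{\mathcal{X}\times\mathcal{X}}:\ \sum_y\nu_{xy}\le n_x\ \forall x,\ \sum_x\nu_{xy}\le n_y\ \forall y\}$ and $\mathcal{W}_{\mathcal{B}}(n,n,\Phi/2)=\max_{\nu\in\mathcal{B}(n,n)}\sum_{x,y}\nu_{xy}\Phi_{xy}/2$.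 For a vector $f$ of nonnegative reals, $\mathcal{W}_{\mathcal{B}}(f,f,\Phi/2)$ is defined by the same maximization with $\nu_{xy}\in\mathbb{N}$ replaced by $\nu_{xy}\ge0$ real (a linear program). *)

theory Defs
  imports Complex_Main
begin

text \<open>Types range over a finite type 'x (nonempty since HOL types are nonempty).\<close>

definition roommate_feasible :: "('x::finite \<Rightarrow> nat) \<Rightarrow> ('x \<Rightarrow> 'x \<Rightarrow> nat) set" where
  "roommate_feasible n = {\<mu>. (\<forall>x y. \<mu> x y = \<mu> y x) \<and>
      (\<forall>x. 2 * \<mu> x x + (\<Sum>y\<in>UNIV - {x}. \<mu> x y) \<le> n x)}"

definition roommate_surplus :: "('x::finite \<Rightarrow> 'x \<Rightarrow> nat) \<Rightarrow> ('x \<Rightarrow> 'x \<Rightarrow> real) \<Rightarrow> real" where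
  "roommate_surplus \<mu> \<Phi> = (\<Sum>x\<in>UNIV. real (\<mu> x x) * \<Phi> x x)
      + (\<Sum>(x,y)\<in>{(x,y). x \<noteq> y}. real (\<mu> x y) * \<Phi> x y / 2)"

definition W_P :: "('x::finite \<Rightarrow> nat) \<Rightarrow> ('x \<Rightarrow> 'x \<Rightarrow> real) \<Rightarrow> real" where
  "W_P n \<Phi> = Max ((\<lambda>\<mu>. roommate_surplus \<mu> \<Phi>) ` roommate_feasible n)"

definition bip_feasible :: "('x::finite \<Rightarrow> nat) \<Rightarrow> ('x \<Rightarrow> nat) \<Rightarrow> ('x \<Rightarrow> 'x \<Rightarrow> nat) set" where
  "bip_feasible n m = {\<nu>. (\<forall>x. (\<Sum>y\<in>UNIV. \<nu> x y) \<le> n x) \<and> (\<forall>y. (\<Sum>x\<in>UNIV. \<nu> x y) \<le> m y)}"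

definition W_B :: "('x::finite \<Rightarrow> nat) \<Rightarrow> ('x \<Rightarrow> nat) \<Rightarrow> ('x \<Rightarrow> 'x \<Rightarrow> real) \<Rightarrow> real" where
  "W_B n m \<Psi> = Max ((\<lambda>\<nu>. \<Sum>(x,y)\<in>UNIV. real (\<nu> x y) * \<Psi> x y) ` bip_feasible n m)"

definition bip_feasible_real :: "('x::finite \<Rightarrow> real) \<Rightarrow> ('x \<Rightarrow> real) \<Rightarrow> ('x \<Rightarrow> 'x \<Rightarrow> real) set" where
  "bip_feasible_real f g = {\<nu>. (\<forall>x y. 0 \<le> \<nu> x y) \<and>
      (\<forall>x. (\<Sum>y\<in>UNIV. \<nu> x y) \<le> f x) \<and> (\<forall>y. (\<Sum>x\<in>UNIV. \<nu> x y) \<le> g y)}"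

definition W_B_real :: "('x::finite \<Rightarrow> real) \<Rightarrow> ('x \<Rightarrow> real) \<Rightarrow> ('x \<Rightarrow> 'x \<Rightarrow> real) \<Rightarrow> real" where
  "W_B_real f g \<Psi> = Sup ((\<lambda>\<nu>. \<Sum>(x,y)\<in>UNIV. \<nu> x y * \<Psi> x y) ` bip_feasible_real f g)"

end

theory Submission
  imports Defs
begin

(* A roommate matching becomes a bipartite matching of the same value for \<Phi>/2 by counting
   every same-type pair twice, so W_P n \<Phi> \<le> W_B n n (\<Phi>/2).  Integer bipartite matchings are
   feasible for the linear program, so W_B n n (\<Phi>/2) \<le> W_B_real n n (\<Phi>/2).  Conversely, a
   fractional plan for the marginals n can be symmetrised without changing its value (\<Phi> is
   symmetric) and then rounded down entrywise to a roommate matching, losing at most \<Sum>|\<Phi>|.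
   Since W_B_real is positively homogeneous, dividing by N squeezes W_P/N and W_B/N between
   W_B_real (n/N) (n/N) (\<Phi>/2) - \<Sum>|\<Phi>|/N and W_B_real (n/N) (n/N) (\<Phi>/2).  Finally W_B_real is
   Lipschitz in the marginals (cutting every entry of a plan by d makes it feasible for marginals
   that are d smaller), so it is continuous and the bounds converge to W_B_real f f (\<Phi>/2). *)

lemma finite_bounded_funs: "finite {\<mu> :: 'x::finite \<Rightarrow> 'y::finite \<Rightarrow> nat. \<forall>x y. \<mu> x y \<le> B}"
proof -
  have "finite {g :: 'y \<Rightarrow> nat. \<forall>y. g y \<in> {..B}}"
    using finite_set_of_finite_funs[of "UNIV :: 'y set" "{..B}"] by simp
  then have "finite {\<mu> :: 'x \<Rightarrow> 'y \<Rightarrow> nat. \<forall>x. \<mu> x \<in> {g. \<forall>y. g y \<in> {..B}}}"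
    using finite_set_of_finite_funs[of "UNIV :: 'x set" "{g :: 'y \<Rightarrow> nat. \<forall>y. g y \<in> {..B}}"] by simp
  then show ?thesis by simp
qed

lemma sum_pairs_split_diagonal:
  fixes h :: "'x::finite \<times> 'x \<Rightarrow> 'a::comm_monoid_add"
  shows "(\<Sum>p\<in>UNIV. h p) = (\<Sum>x\<in>UNIV. h (x, x)) + (\<Sum>p\<in>{(x, y). x \<noteq> y}. h p)"
proof -
  have "(UNIV :: ('x \<times> 'x) set) = (\<lambda>x. (x, x)) ` UNIV \<union> {(x, y). x \<noteq> y}" by auto
  then have "(\<Sum>p\<in>UNIV. h p) = (\<Sum>p\<in>(\<lambda>x. (x, x)) ` UNIV. h p) + (\<Sum>p\<in>{(x, y). x \<noteq> y}. h p)"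
    by (subst sum.union_disjoint[symmetric]) auto
  then show ?thesis by (simp add: sum.reindex inj_on_def)
qed

lemma sum_pairs_transpose:
  fixes h :: "'x::finite \<Rightarrow> 'y::finite \<Rightarrow> 'a::comm_monoid_add"
  shows "(\<Sum>(x, y)\<in>UNIV. h x y) = (\<Sum>(y, x)\<in>UNIV. h x y)"
  by (rule sum.reindex_bij_witness[of _ prod.swap prod.swap]) auto

lemma roommate_feasible_le: "\<mu> \<in> roommate_feasible n \<Longrightarrow> \<mu> x y \<le> n x"
proof -
  assume "\<mu> \<in> roommate_feasible n"
  then have row: "2 * \<mu> x x + (\<Sum>y\<in>UNIV - {x}. \<mu> x y) \<le> n x"
    unfolding roommate_feasible_def by blast
  show "\<mu> x y \<le> n x"
  proof (cases "x = y")
    case False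
    then have "\<mu> x y \<le> (\<Sum>y\<in>UNIV - {x}. \<mu> x y)" by (intro member_le_sum) auto
    with row show ?thesis by linarith
  qed (use row in simp)
qed

lemma bip_feasible_le: "\<nu> \<in> bip_feasible n m \<Longrightarrow> \<nu> x y \<le> n x"
proof -
  assume "\<nu> \<in> bip_feasible n m"
  then have "(\<Sum>y\<in>UNIV. \<nu> x y) \<le> n x" by (simp add: bip_feasible_def)
  moreover have "\<nu> x y \<le> (\<Sum>y\<in>UNIV. \<nu> x y)" by (intro member_le_sum) auto
  ultimately show ?thesis by linarith
qed

lemma finite_roommate_feasible: "finite (roommate_feasible n)"
  by (rule finite_subset[OF _ finite_bounded_funs[of "\<Sum>z\<in>UNIV. n z"]])
    (auto intro: order_trans[OF roommate_feasible_le member_le_sum])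

lemma finite_bip_feasible: "finite (bip_feasible n m)"
  by (rule finite_subset[OF _ finite_bounded_funs[of "\<Sum>z\<in>UNIV. n z"]])
    (auto intro: order_trans[OF bip_feasible_le member_le_sum])

lemma roommate_surplus_le_W_P: "\<mu> \<in> roommate_feasible n \<Longrightarrow> roommate_surplus \<mu> \<Phi> \<le> W_P n \<Phi>"
  unfolding W_P_def by (rule Max_ge) (auto intro: finite_roommate_feasible)

lemma W_P_attained: "\<exists>\<mu>\<in>roommate_feasible n. W_P n \<Phi> = roommate_surplus \<mu> \<Phi>"
proof -
  have "(\<lambda>x y. 0) \<in> roommate_feasible n" by (simp add: roommate_feasible_def)
  then have "W_P n \<Phi> \<in> (\<lambda>\<mu>. roommate_surplus \<mu> \<Phi>) ` roommate_feasible n"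
    unfolding W_P_def by (intro Max_in) (auto intro: finite_roommate_feasible)
  then show ?thesis by auto
qed

lemma bip_value_le_W_B:
  "\<nu> \<in> bip_feasible n m \<Longrightarrow> (\<Sum>(x, y)\<in>UNIV. real (\<nu> x y) * \<Psi> x y) \<le> W_B n m \<Psi>"
  unfolding W_B_def by (rule Max_ge) (auto intro: finite_bip_feasible)

lemma W_B_attained: "\<exists>\<nu>\<in>bip_feasible n m. W_B n m \<Psi> = (\<Sum>(x, y)\<in>UNIV. real (\<nu> x y) * \<Psi> x y)"
proof -
  have "(\<lambda>x y. 0) \<in> bip_feasible n m" by (simp add: bip_feasible_def)
  then have "W_B n m \<Psi> \<in> (\<lambda>\<nu>. \<Sum>(x, y)\<in>UNIV. real (\<nu> x y) * \<Psi> x y) ` bip_feasible n m"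
    unfolding W_B_def by (intro Max_in) (auto intro: finite_bip_feasible)
  then show ?thesis by auto
qed

definition double_diag :: "('x \<Rightarrow> 'x \<Rightarrow> nat) \<Rightarrow> 'x \<Rightarrow> 'x \<Rightarrow> nat" where
  "double_diag \<mu> x y = (if x = y then 2 * \<mu> x y else \<mu> x y)"

lemma sum_double_diag_row:
  fixes \<mu> :: "'x::finite \<Rightarrow> 'x \<Rightarrow> nat"
  shows "(\<Sum>y\<in>UNIV. double_diag \<mu> x y) = 2 * \<mu> x x + (\<Sum>y\<in>UNIV - {x}. \<mu> x y)"
  by (subst sum.remove[of _ x]) (auto simp: double_diag_def)

lemma roommate_surplus_double_diag:
  "roommate_surplus \<mu> \<Phi> = (\<Sum>(x, y)\<in>UNIV. real (double_diag \<mu> x y) * (\<Phi> x y / 2))"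
  unfolding roommate_surplus_def sum_pairs_split_diagonal[where h = "\<lambda>(x, y). real (double_diag \<mu> x y) * (\<Phi> x y / 2)"]
  by (intro arg_cong2[where f = "(+)"] sum.cong) (auto simp: double_diag_def)

lemma double_diag_bip_feasible:
  assumes "\<mu> \<in> roommate_feasible n"
  shows "double_diag \<mu> \<in> bip_feasible n n"
proof -
  have row: "(\<Sum>y\<in>UNIV. double_diag \<mu> x y) \<le> n x" for x
    using assms unfolding roommate_feasible_def sum_double_diag_row by blast
  have "double_diag \<mu> x y = double_diag \<mu> y x" for x y
    using assms by (simp add: roommate_feasible_def double_diag_def)
  with row show ?thesis
    unfolding bip_feasible_def by simp
qed

lemma W_P_le_W_B: "W_P n \<Phi> \<le> W_B n n (\<lambda>x y. \<Phi> x y / 2)"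
proof -
  obtain \<mu> where \<mu>: "\<mu> \<in> roommate_feasible n" and opt: "W_P n \<Phi> = roommate_surplus \<mu> \<Phi>"
    using W_P_attained by blast
  show ?thesis
    using bip_value_le_W_B[OF double_diag_bip_feasible[OF \<mu>]]
    unfolding opt roommate_surplus_double_diag .
qed

abbreviation bip_value :: "('x::finite \<Rightarrow> 'x \<Rightarrow> real) \<Rightarrow> ('x \<Rightarrow> 'x \<Rightarrow> real) \<Rightarrow> real" where
  "bip_value \<nu> \<Psi> \<equiv> \<Sum>(x, y)\<in>UNIV. \<nu> x y * \<Psi> x y"

lemma mult_le_times_abs:
  fixes a b p :: real
  assumes "0 \<le> a" "a \<le> b"
  shows "a * p \<le> b * \<bar>p\<bar>"
  using assms by (meson abs_ge_self abs_ge_zero mult_left_mono mult_right_mono order_trans)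

lemma bip_feasible_real_nonneg: "\<nu> \<in> bip_feasible_real f g \<Longrightarrow> 0 \<le> \<nu> x y"
  by (simp add: bip_feasible_real_def)

lemma bip_feasible_real_le:
  fixes \<nu> :: "'x::finite \<Rightarrow> 'x \<Rightarrow> real"
  assumes "\<nu> \<in> bip_feasible_real f g"
  shows "\<nu> x y \<le> f x"
proof -
  have "\<nu> x y \<le> (\<Sum>y\<in>UNIV. \<nu> x y)"
    using assms by (intro member_le_sum) (auto simp: bip_feasible_real_def)
  also have "\<dots> \<le> f x" using assms by (simp add: bip_feasible_real_def)
  finally show ?thesis .
qed

lemma bip_value_le_W_B_real:
  fixes \<nu> :: "'x::finite \<Rightarrow> 'x \<Rightarrow> real"
  assumes "\<nu> \<in> bip_feasible_real f g"
  shows "bip_value \<nu> \<Psi> \<le> W_B_real f g \<Psi>"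
proof -
  have "bip_value \<nu>' \<Psi> \<le> (\<Sum>(x, y)\<in>UNIV. f x * \<bar>\<Psi> x y\<bar>)" if "\<nu>' \<in> bip_feasible_real f g" for \<nu>'
    using that bip_feasible_real_nonneg[OF that] bip_feasible_real_le[OF that]
    by (intro sum_mono) (auto intro: mult_le_times_abs)
  then have "bdd_above ((\<lambda>\<nu>. bip_value \<nu> \<Psi>) ` bip_feasible_real f g)"
    by (intro bdd_aboveI2)
  then show ?thesis
    unfolding W_B_real_def using assms by (intro cSup_upper) auto
qed

lemma W_B_real_least:
  fixes f g :: "'x::finite \<Rightarrow> real"
  assumes "\<And>x. 0 \<le> f x" "\<And>y. 0 \<le> g y"
    and "\<And>\<nu>. \<nu> \<in> bip_feasible_real f g \<Longrightarrow> bip_value \<nu> \<Psi> \<le> c"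
  shows "W_B_real f g \<Psi> \<le> c"
proof -
  have "(\<lambda>x y. 0) \<in> bip_feasible_real f g"
    using assms(1,2) by (simp add: bip_feasible_real_def)
  then show ?thesis
    unfolding W_B_real_def using assms(3) by (intro cSup_least) auto
qed

lemma bip_feasible_real_scale:
  fixes \<nu> :: "'x::finite \<Rightarrow> 'x \<Rightarrow> real"
  assumes "0 < c" "\<nu> \<in> bip_feasible_real f g"
  shows "(\<lambda>x y. c * \<nu> x y) \<in> bip_feasible_real (\<lambda>x. c * f x) (\<lambda>y. c * g y)"
  using assms by (simp add: bip_feasible_real_def flip: sum_distrib_left)

lemma bip_value_scale:
  fixes \<nu> :: "'x::finite \<Rightarrow> 'x \<Rightarrow> real"
  shows "bip_value (\<lambda>x y. c * \<nu> x y) \<Psi> = c * bip_value \<nu> \<Psi>"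
  by (simp add: sum_distrib_left case_prod_beta mult.assoc)

lemma W_B_real_scale_le:
  fixes f g :: "'x::finite \<Rightarrow> real"
  assumes c: "0 < c" and "\<And>x. 0 \<le> f x" "\<And>y. 0 \<le> g y"
  shows "W_B_real (\<lambda>x. c * f x) (\<lambda>y. c * g y) \<Psi> \<le> c * W_B_real f g \<Psi>"
proof (rule W_B_real_least)
  fix \<nu> assume "\<nu> \<in> bip_feasible_real (\<lambda>x. c * f x) (\<lambda>y. c * g y)"
  then have "(\<lambda>x y. inverse c * \<nu> x y)
      \<in> bip_feasible_real (\<lambda>x. inverse c * (c * f x)) (\<lambda>y. inverse c * (c * g y))"
    using c by (intro bip_feasible_real_scale) auto
  moreover have "(\<lambda>x. inverse c * (c * h x)) = h" for h :: "'x \<Rightarrow> real"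
    using c by (simp add: fun_eq_iff)
  ultimately have "(\<lambda>x y. inverse c * \<nu> x y) \<in> bip_feasible_real f g"
    by simp
  from bip_value_le_W_B_real[OF this, of \<Psi>]
  have "inverse c * bip_value \<nu> \<Psi> \<le> W_B_real f g \<Psi>"
    unfolding bip_value_scale .
  then show "bip_value \<nu> \<Psi> \<le> c * W_B_real f g \<Psi>"
    using c by (simp add: field_simps)
qed (use assms in auto)

lemma W_B_real_divide:
  fixes f g :: "'x::finite \<Rightarrow> real"
  assumes c: "0 < c" and "\<And>x. 0 \<le> f x" "\<And>y. 0 \<le> g y"
  shows "W_B_real (\<lambda>x. f x / c) (\<lambda>y. g y / c) \<Psi> = W_B_real f g \<Psi> / c"
proof (rule antisym)
  show "W_B_real (\<lambda>x. f x / c) (\<lambda>y. g y / c) \<Psi> \<le> W_B_real f g \<Psi> / c"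
    using W_B_real_scale_le[of "inverse c" f g \<Psi>] assms by (simp add: field_simps)
  have "W_B_real f g \<Psi> \<le> c * W_B_real (\<lambda>x. f x / c) (\<lambda>y. g y / c) \<Psi>"
    using W_B_real_scale_le[of c "\<lambda>x. f x / c" "\<lambda>y. g y / c" \<Psi>] assms by simp
  then show "W_B_real f g \<Psi> / c \<le> W_B_real (\<lambda>x. f x / c) (\<lambda>y. g y / c) \<Psi>"
    using c by (simp add: field_simps)
qed

lemma W_B_le_W_B_real: "W_B n m \<Psi> \<le> W_B_real (\<lambda>x. real (n x)) (\<lambda>y. real (m y)) \<Psi>"
proof -
  obtain \<nu> where \<nu>: "\<nu> \<in> bip_feasible n m" and opt: "W_B n m \<Psi> = bip_value (\<lambda>x y. real (\<nu> x y)) \<Psi>"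
    using W_B_attained by blast
  from \<nu> have "(\<lambda>x y. real (\<nu> x y)) \<in> bip_feasible_real (\<lambda>x. real (n x)) (\<lambda>y. real (m y))"
    by (simp add: bip_feasible_def bip_feasible_real_def flip: of_nat_sum)
  then show ?thesis
    unfolding opt by (rule bip_value_le_W_B_real)
qed

definition round_roommate :: "('x \<Rightarrow> 'x \<Rightarrow> real) \<Rightarrow> 'x \<Rightarrow> 'x \<Rightarrow> nat" where
  "round_roommate s x y = (if x = y then nat \<lfloor>s x y / 2\<rfloor> else nat \<lfloor>s x y\<rfloor>)"

lemma double_diag_round_roommate:
  assumes "0 \<le> s x y"
  shows "real (double_diag (round_roommate s) x y) \<le> s x y"
    and "s x y \<le> real (double_diag (round_roommate s) x y) + 2"
proof -
  have floor: "of_int \<lfloor>t\<rfloor> \<le> t" "t \<le> of_int \<lfloor>t\<rfloor> + 1" for t :: real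
    using of_int_floor_le[of t] real_of_int_floor_add_one_gt[of t] by linarith+
  have "real (double_diag (round_roommate s) x y) \<le> s x y \<and> s x y \<le> real (double_diag (round_roommate s) x y) + 2"
  proof (cases "x = y")
    case True
    then have "real (double_diag (round_roommate s) x y) = 2 * of_int \<lfloor>s x y / 2\<rfloor>"
      using assms by (simp add: double_diag_def round_roommate_def of_nat_nat)
    then show ?thesis using floor[of "s x y / 2"] by linarith
  next
    case False
    then have "real (double_diag (round_roommate s) x y) = of_int \<lfloor>s x y\<rfloor>"
      using assms by (simp add: double_diag_def round_roommate_def of_nat_nat)
    then show ?thesis using floor[of "s x y"] by linarith
  qed
  then show "real (double_diag (round_roommate s) x y) \<le> s x y"
    and "s x y \<le> real (double_diag (round_roommate s) x y) + 2"
    by auto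
qed

lemma roommate_rounding:
  fixes s :: "'x::finite \<Rightarrow> 'x \<Rightarrow> real" and n :: "'x \<Rightarrow> nat"
  assumes nonneg: "\<And>x y. 0 \<le> s x y" and sym: "\<And>x y. s x y = s y x"
    and row: "\<And>x. (\<Sum>y\<in>UNIV. s x y) \<le> real (n x)"
  shows "round_roommate s \<in> roommate_feasible n"
    and "bip_value s (\<lambda>x y. \<Phi> x y / 2) \<le> roommate_surplus (round_roommate s) \<Phi> + (\<Sum>(x, y)\<in>UNIV. \<bar>\<Phi> x y\<bar>)"
proof -
  let ?\<mu> = "round_roommate s"
  note bounds = double_diag_round_roommate[of s, OF nonneg]
  have "real (2 * ?\<mu> x x + (\<Sum>y\<in>UNIV - {x}. ?\<mu> x y)) \<le> real (n x)" for x
  proof -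
    have "real (2 * ?\<mu> x x + (\<Sum>y\<in>UNIV - {x}. ?\<mu> x y)) = (\<Sum>y\<in>UNIV. real (double_diag ?\<mu> x y))"
      unfolding sum_double_diag_row[symmetric] by simp
    also have "\<dots> \<le> (\<Sum>y\<in>UNIV. s x y)" using bounds(1) by (rule sum_mono)
    finally show ?thesis using row[of x] by linarith
  qed
  then show "?\<mu> \<in> roommate_feasible n"
    unfolding roommate_feasible_def of_nat_le_iff by (simp add: round_roommate_def sym)
  have "bip_value s (\<lambda>x y. \<Phi> x y / 2)
      \<le> (\<Sum>(x, y)\<in>UNIV. real (double_diag ?\<mu> x y) * (\<Phi> x y / 2) + \<bar>\<Phi> x y\<bar>)"
  proof (intro sum_mono, clarify)
    fix x y
    have "(s x y - real (double_diag ?\<mu> x y)) * (\<Phi> x y / 2) \<le> 2 * \<bar>\<Phi> x y / 2\<bar>"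
      using bounds[of x y] by (intro mult_le_times_abs) auto
    then show "s x y * (\<Phi> x y / 2) \<le> real (double_diag ?\<mu> x y) * (\<Phi> x y / 2) + \<bar>\<Phi> x y\<bar>"
      by (simp add: algebra_simps)
  qed
  then show "bip_value s (\<lambda>x y. \<Phi> x y / 2) \<le> roommate_surplus ?\<mu> \<Phi> + (\<Sum>(x, y)\<in>UNIV. \<bar>\<Phi> x y\<bar>)"
    by (simp add: roommate_surplus_double_diag sum.distrib case_prod_beta)
qed

lemma bip_value_symmetrize:
  fixes \<nu> \<Psi> :: "'x::finite \<Rightarrow> 'x \<Rightarrow> real"
  assumes "\<And>x y. \<Psi> x y = \<Psi> y x"
  shows "bip_value \<nu> \<Psi> = bip_value (\<lambda>x y. (\<nu> x y + \<nu> y x) / 2) \<Psi>"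
proof -
  have "bip_value (\<lambda>x y. \<nu> y x) \<Psi> = bip_value \<nu> \<Psi>"
    using sum_pairs_transpose[of "\<lambda>y x. \<nu> x y * \<Psi> y x"] assms by simp
  then show ?thesis
    by (simp add: add_divide_distrib distrib_right sum.distrib case_prod_beta flip: sum_divide_distrib)
qed

lemma W_B_real_le_W_P:
  fixes \<Phi> :: "'x::finite \<Rightarrow> 'x \<Rightarrow> real" and n :: "'x \<Rightarrow> nat"
  assumes sym: "\<And>x y. \<Phi> x y = \<Phi> y x"
  shows "W_B_real (\<lambda>x. real (n x)) (\<lambda>x. real (n x)) (\<lambda>x y. \<Phi> x y / 2)
    \<le> W_P n \<Phi> + (\<Sum>(x, y)\<in>UNIV. \<bar>\<Phi> x y\<bar>)"
proof (rule W_B_real_least)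
  fix \<nu> assume \<nu>: "\<nu> \<in> bip_feasible_real (\<lambda>x. real (n x)) (\<lambda>x. real (n x))"
  define s where "s x y = (\<nu> x y + \<nu> y x) / 2" for x y
  have "(\<Sum>y\<in>UNIV. s x y) \<le> real (n x)" for x
  proof -
    have "(\<Sum>y\<in>UNIV. \<nu> x y) \<le> real (n x)" "(\<Sum>y\<in>UNIV. \<nu> y x) \<le> real (n x)"
      using \<nu> by (auto simp: bip_feasible_real_def)
    then show ?thesis by (simp add: s_def sum.distrib flip: sum_divide_distrib)
  qed
  moreover have "0 \<le> s x y" "s x y = s y x" for x y
    using \<nu> by (auto simp: s_def bip_feasible_real_def)
  ultimately have "round_roommate s \<in> roommate_feasible n"
    and rounded: "bip_value s (\<lambda>x y. \<Phi> x y / 2)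
      \<le> roommate_surplus (round_roommate s) \<Phi> + (\<Sum>(x, y)\<in>UNIV. \<bar>\<Phi> x y\<bar>)"
    by (intro roommate_rounding; blast)+
  have "bip_value \<nu> (\<lambda>x y. \<Phi> x y / 2) = bip_value s (\<lambda>x y. \<Phi> x y / 2)"
    unfolding s_def by (rule bip_value_symmetrize) (simp add: sym)
  also have "\<dots> \<le> roommate_surplus (round_roommate s) \<Phi> + (\<Sum>(x, y)\<in>UNIV. \<bar>\<Phi> x y\<bar>)"
    by (rule rounded)
  also have "\<dots> \<le> W_P n \<Phi> + (\<Sum>(x, y)\<in>UNIV. \<bar>\<Phi> x y\<bar>)"
    using roommate_surplus_le_W_P[OF \<open>round_roommate s \<in> roommate_feasible n\<close>] by simp
  finally show "bip_value \<nu> (\<lambda>x y. \<Phi> x y / 2) \<le> W_P n \<Phi> + (\<Sum>(x, y)\<in>UNIV. \<bar>\<Phi> x y\<bar>)" .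
qed auto

lemma sum_max_0_diff_le:
  fixes a :: "'a \<Rightarrow> real"
  assumes "finite A" "\<And>y. y \<in> A \<Longrightarrow> 0 \<le> a y" "0 \<le> d"
  shows "(\<Sum>y\<in>A. max 0 (a y - d)) \<le> max 0 ((\<Sum>y\<in>A. a y) - d)"
proof (cases "\<forall>y\<in>A. a y \<le> d")
  case True
  then have "(\<Sum>y\<in>A. max 0 (a y - d)) = 0" by (intro sum.neutral) auto
  then show ?thesis by simp
next
  case False
  then obtain y0 where y0: "y0 \<in> A" "d < a y0" by (auto simp: not_le)
  have "(\<Sum>y\<in>A. max 0 (a y - d)) = max 0 (a y0 - d) + (\<Sum>y\<in>A - {y0}. max 0 (a y - d))"
    using assms(1) y0(1) by (rule sum.remove)
  also have "\<dots> \<le> (a y0 - d) + (\<Sum>y\<in>A - {y0}. a y)"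
    using y0 assms by (intro add_mono sum_mono) auto
  also have "\<dots> = (\<Sum>y\<in>A. a y) - d"
    using assms(1) y0(1) by (simp add: sum.remove)
  finally show ?thesis by simp
qed

lemma bip_feasible_real_truncate:
  fixes \<nu> :: "'x::finite \<Rightarrow> 'x \<Rightarrow> real"
  assumes \<nu>: "\<nu> \<in> bip_feasible_real g g'" and d: "0 \<le> d"
    and h: "\<And>x. 0 \<le> h x" "\<And>y. 0 \<le> h' y"
    and close: "\<And>x. g x \<le> h x + d" "\<And>y. g' y \<le> h' y + d"
  shows "(\<lambda>x y. max 0 (\<nu> x y - d)) \<in> bip_feasible_real h h'"
proof -
  have nonneg: "0 \<le> \<nu> x y" for x y using \<nu> by (simp add: bip_feasible_real_def)
  have "(\<Sum>y\<in>UNIV. max 0 (\<nu> x y - d)) \<le> h x" for x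
  proof -
    have "(\<Sum>y\<in>UNIV. max 0 (\<nu> x y - d)) \<le> max 0 ((\<Sum>y\<in>UNIV. \<nu> x y) - d)"
      using nonneg d by (intro sum_max_0_diff_le) auto
    moreover have "(\<Sum>y\<in>UNIV. \<nu> x y) \<le> g x" using \<nu> by (simp add: bip_feasible_real_def)
    ultimately show ?thesis using h(1)[of x] close(1)[of x] by linarith
  qed
  moreover have "(\<Sum>x\<in>UNIV. max 0 (\<nu> x y - d)) \<le> h' y" for y
  proof -
    have "(\<Sum>x\<in>UNIV. max 0 (\<nu> x y - d)) \<le> max 0 ((\<Sum>x\<in>UNIV. \<nu> x y) - d)"
      using nonneg d by (intro sum_max_0_diff_le) auto
    moreover have "(\<Sum>x\<in>UNIV. \<nu> x y) \<le> g' y" using \<nu> by (simp add: bip_feasible_real_def)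
    ultimately show ?thesis using h(2)[of y] close(2)[of y] by linarith
  qed
  ultimately show ?thesis by (simp add: bip_feasible_real_def)
qed

lemma W_B_real_le_shift:
  fixes g g' h h' :: "'x::finite \<Rightarrow> real"
  assumes g: "\<And>x. 0 \<le> g x" "\<And>y. 0 \<le> g' y" and h: "\<And>x. 0 \<le> h x" "\<And>y. 0 \<le> h' y"
    and d: "0 \<le> d" and close: "\<And>x. g x \<le> h x + d" "\<And>y. g' y \<le> h' y + d"
  shows "W_B_real g g' \<Psi> \<le> W_B_real h h' \<Psi> + d * (\<Sum>(x, y)\<in>UNIV. \<bar>\<Psi> x y\<bar>)"
proof (rule W_B_real_least[OF g])
  fix \<nu> assume \<nu>: "\<nu> \<in> bip_feasible_real g g'"
  define \<nu>' where "\<nu>' x y = max 0 (\<nu> x y - d)" for x y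
  have "bip_value \<nu> \<Psi> \<le> (\<Sum>(x, y)\<in>UNIV. \<nu>' x y * \<Psi> x y + d * \<bar>\<Psi> x y\<bar>)"
  proof (intro sum_mono, clarify)
    fix x y
    have "(\<nu> x y - \<nu>' x y) * \<Psi> x y \<le> d * \<bar>\<Psi> x y\<bar>"
      using bip_feasible_real_nonneg[OF \<nu>, of x y] d
      by (intro mult_le_times_abs) (auto simp: \<nu>'_def)
    then show "\<nu> x y * \<Psi> x y \<le> \<nu>' x y * \<Psi> x y + d * \<bar>\<Psi> x y\<bar>"
      by (simp add: algebra_simps)
  qed
  also have "\<dots> = bip_value \<nu>' \<Psi> + d * (\<Sum>(x, y)\<in>UNIV. \<bar>\<Psi> x y\<bar>)"
    by (simp add: sum.distrib sum_distrib_left case_prod_beta)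
  also have "\<dots> \<le> W_B_real h h' \<Psi> + d * (\<Sum>(x, y)\<in>UNIV. \<bar>\<Psi> x y\<bar>)"
    using bip_feasible_real_truncate[OF \<nu> d h close] unfolding \<nu>'_def[abs_def]
    by (simp add: bip_value_le_W_B_real)
  finally show "bip_value \<nu> \<Psi> \<le> W_B_real h h' \<Psi> + d * (\<Sum>(x, y)\<in>UNIV. \<bar>\<Psi> x y\<bar>)" .
qed

lemma tendsto_W_B_real:
  fixes g g' :: "nat \<Rightarrow> 'x::finite \<Rightarrow> real"
  assumes lim: "\<And>x. (\<lambda>k. g k x) \<longlonglongrightarrow> f x" "\<And>y. (\<lambda>k. g' k y) \<longlonglongrightarrow> f' y"
    and nonneg: "\<And>k x. 0 \<le> g k x" "\<And>k y. 0 \<le> g' k y"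
  shows "(\<lambda>k. W_B_real (g k) (g' k) \<Psi>) \<longlonglongrightarrow> W_B_real f f' \<Psi>"
proof -
  have f: "0 \<le> f x" "0 \<le> f' x" for x
    using LIMSEQ_le_const[OF lim(1)] LIMSEQ_le_const[OF lim(2)] nonneg by blast+
  define d where "d k = (\<Sum>x\<in>UNIV. \<bar>g k x - f x\<bar>) + (\<Sum>y\<in>UNIV. \<bar>g' k y - f' y\<bar>)" for k
  have "d \<longlonglongrightarrow> (\<Sum>x\<in>UNIV. \<bar>f x - f x\<bar>) + (\<Sum>y\<in>UNIV. \<bar>f' y - f' y\<bar>)"
    unfolding d_def[abs_def] by (intro tendsto_intros lim)
  then have d0: "d \<longlonglongrightarrow> 0" by simp
  have close: "\<bar>g k x - f x\<bar> \<le> d k" "\<bar>g' k x - f' x\<bar> \<le> d k" for k x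
  proof -
    have "\<bar>g k x - f x\<bar> \<le> (\<Sum>x\<in>UNIV. \<bar>g k x - f x\<bar>)" "\<bar>g' k x - f' x\<bar> \<le> (\<Sum>y\<in>UNIV. \<bar>g' k y - f' y\<bar>)"
      by (intro member_le_sum; simp)+
    moreover have "0 \<le> (\<Sum>x\<in>UNIV. \<bar>g k x - f x\<bar>)" "0 \<le> (\<Sum>y\<in>UNIV. \<bar>g' k y - f' y\<bar>)"
      by (simp_all add: sum_nonneg)
    ultimately show "\<bar>g k x - f x\<bar> \<le> d k" "\<bar>g' k x - f' x\<bar> \<le> d k"
      unfolding d_def by linarith+
  qed
  have d_nonneg: "0 \<le> d k" for k
    using close(1)[of k undefined] by linarith
  moreover have "g k x \<le> f x + d k" "f x \<le> g k x + d k" "g' k x \<le> f' x + d k" "f' x \<le> g' k x + d k"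
    for k x using close[of k x] by (simp_all add: abs_le_iff)
  ultimately have shift: "W_B_real (g k) (g' k) \<Psi> \<le> W_B_real f f' \<Psi> + d k * (\<Sum>(x, y)\<in>UNIV. \<bar>\<Psi> x y\<bar>)"
    "W_B_real f f' \<Psi> \<le> W_B_real (g k) (g' k) \<Psi> + d k * (\<Sum>(x, y)\<in>UNIV. \<bar>\<Psi> x y\<bar>)" for k
    by (intro W_B_real_le_shift f nonneg; simp)+
  have "\<bar>W_B_real (g k) (g' k) \<Psi> - W_B_real f f' \<Psi>\<bar> \<le> d k * (\<Sum>(x, y)\<in>UNIV. \<bar>\<Psi> x y\<bar>)" for k
    unfolding abs_le_iff using shift[of k] by linarith
  then have "(\<lambda>k. W_B_real (g k) (g' k) \<Psi> - W_B_real f f' \<Psi>) \<longlonglongrightarrow> 0"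
    by (intro tendsto_0_le[OF d0, of _ "\<Sum>(x, y)\<in>UNIV. \<bar>\<Psi> x y\<bar>"]) (simp add: abs_of_nonneg d_nonneg)
  then show ?thesis by (rule LIM_zero_cancel)
qed

lemma W_P_W_B_scaled_bounds:
  fixes \<Phi> :: "'x::finite \<Rightarrow> 'x \<Rightarrow> real" and n :: "'x \<Rightarrow> nat"
  assumes sym: "\<And>x y. \<Phi> x y = \<Phi> y x" and c: "0 < c"
  defines "V \<equiv> W_B_real (\<lambda>x. real (n x) / c) (\<lambda>x. real (n x) / c) (\<lambda>x y. \<Phi> x y / 2)"
  shows "V - (\<Sum>(x, y)\<in>UNIV. \<bar>\<Phi> x y\<bar>) / c \<le> W_P n \<Phi> / c"
    and "W_P n \<Phi> / c \<le> W_B n n (\<lambda>x y. \<Phi> x y / 2) / c"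
    and "W_B n n (\<lambda>x y. \<Phi> x y / 2) / c \<le> V"
proof -
  have V: "V = W_B_real (\<lambda>x. real (n x)) (\<lambda>x. real (n x)) (\<lambda>x y. \<Phi> x y / 2) / c"
    unfolding V_def using c by (intro W_B_real_divide) auto
  show "V - (\<Sum>(x, y)\<in>UNIV. \<bar>\<Phi> x y\<bar>) / c \<le> W_P n \<Phi> / c"
    unfolding V diff_divide_distrib[symmetric] using c W_B_real_le_W_P[of \<Phi> n, OF sym]
    by (intro divide_right_mono) auto
  show "W_P n \<Phi> / c \<le> W_B n n (\<lambda>x y. \<Phi> x y / 2) / c"
    using c W_P_le_W_B by (intro divide_right_mono) auto
  show "W_B n n (\<lambda>x y. \<Phi> x y / 2) / c \<le> V"
    unfolding V using c W_B_le_W_B_real by (intro divide_right_mono) auto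
qed

theorem proposition2:
  fixes \<Phi> :: "'x::finite \<Rightarrow> 'x \<Rightarrow> real"
    and n :: "nat \<Rightarrow> 'x \<Rightarrow> nat"
    and f :: "'x \<Rightarrow> real"
  assumes sym: "\<And>x y. \<Phi> x y = \<Phi> y x"
    and N_inf: "filterlim (\<lambda>k. (\<Sum>x\<in>UNIV. n k x)) at_top sequentially"
    and freq: "\<And>x. (\<lambda>k. real (n k x) / real (\<Sum>z\<in>UNIV. n k z)) \<longlonglongrightarrow> f x"
  shows "((\<lambda>k. W_P (n k) \<Phi> / real (\<Sum>z\<in>UNIV. n k z))
           \<longlonglongrightarrow> W_B_real f f (\<lambda>x y. \<Phi> x y / 2))
       \<and> ((\<lambda>k. W_B (n k) (n k) (\<lambda>x y. \<Phi> x y / 2) / real (\<Sum>z\<in>UNIV. n k z))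
           \<longlonglongrightarrow> W_B_real f f (\<lambda>x y. \<Phi> x y / 2))"
proof -
  define N where "N k = real (\<Sum>z\<in>UNIV. n k z)" for k
  define V where "V k = W_B_real (\<lambda>x. real (n k x) / N k) (\<lambda>x. real (n k x) / N k) (\<lambda>x y. \<Phi> x y / 2)" for k
  have V: "V \<longlonglongrightarrow> W_B_real f f (\<lambda>x y. \<Phi> x y / 2)"
    unfolding V_def using freq by (intro tendsto_W_B_real) (simp_all add: N_def sum_nonneg)
  have N: "filterlim N at_top sequentially"
    unfolding N_def by (rule filterlim_compose[OF filterlim_real_sequentially N_inf])
  then have "(\<lambda>k. (\<Sum>(x, y)\<in>UNIV. \<bar>\<Phi> x y\<bar>) / N k) \<longlonglongrightarrow> 0"
    by (intro tendsto_divide_0[OF tendsto_const] filterlim_at_top_imp_at_infinity)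
  from tendsto_diff[OF V this]
  have lower: "(\<lambda>k. V k - (\<Sum>(x, y)\<in>UNIV. \<bar>\<Phi> x y\<bar>) / N k) \<longlonglongrightarrow> W_B_real f f (\<lambda>x y. \<Phi> x y / 2)"
    by simp
  have "\<forall>\<^sub>F k in sequentially. 0 < N k"
    using N by (simp add: filterlim_at_top_dense)
  then have "\<forall>\<^sub>F k in sequentially. V k - (\<Sum>(x, y)\<in>UNIV. \<bar>\<Phi> x y\<bar>) / N k \<le> W_P (n k) \<Phi> / N k
      \<and> W_P (n k) \<Phi> / N k \<le> W_B (n k) (n k) (\<lambda>x y. \<Phi> x y / 2) / N k
      \<and> W_B (n k) (n k) (\<lambda>x y. \<Phi> x y / 2) / N k \<le> V k"
    unfolding V_def by eventually_elim (blast intro: W_P_W_B_scaled_bounds[of \<Phi>, OF sym])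
  then have "(\<lambda>k. W_P (n k) \<Phi> / N k) \<longlonglongrightarrow> W_B_real f f (\<lambda>x y. \<Phi> x y / 2)"
    and "(\<lambda>k. W_B (n k) (n k) (\<lambda>x y. \<Phi> x y / 2) / N k) \<longlonglongrightarrow> W_B_real f f (\<lambda>x y. \<Phi> x y / 2)"
    by (auto intro!: tendsto_sandwich[OF _ _ lower V] elim: eventually_mono)
  then show ?thesis
    unfolding N_def by blast
qed

end
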